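(* Let $\Pi\subset\mathbb R^2$ be a convex polygon with vertex set $V=\{\mathbf v_1,\dots,\mathbf v_n\}$ ($n\ge3$, listed counterclockwise, all extreme points), and let $\delta$ be a chordal decomposition of $\Pi$ with triangle set $T_\delta$. Then for every $a\in\Pi$: (a) $\sum_{v\in V}\langle a|v\rangle_\delta=1$; (b) $a=\sum_{v\in V}\langle a|v\rangle_\delta\, v$.
   Context: A chord is a segment joining two vertices of $\Pi$ that are not adjacent on the boundary. A chordal decomposition $\delta$ is a set of $n-3$ pairwise non-crossing chords; they decompose $\Pi$ as a union of $n-2$ closed triangles (regions) whose vertices are vertices of $\Pi$; $T_\delta$ is the set of these triangles. For a triangle $\tau$ with vertices $u_0,u_1,u_2$ in counterclockwise order (indices mod 3), the areal coordinate function is $\langle x|u_i\rangle_\tau=A(u_{i-1},x,u_{i+1})/A(u_0,u_1,u_2)$ for $x\in\Pi$, where $A(\mathbf p,\mathbf q,\mathbf r)=\tfrac12\det[\mathbf q-\mathbf p,\mathbf r-\mathbf p]$. For a subset $X\subseteq\Pi$, $\mathds 1_X$ is its indicator function. Chordal coordinate function: for a vertex $v$, let $\tau_1,\dots,\tau_r$ be an enumeration of the triangles of $T_\delta$ containing $v$; set $F_0=0$ and $F_k=F_{k-1}+\mathds 1_{\tau_k}\cdot\langle\cdot|v\rangle_{\tau_k}-\mathds 1_{\tau_k\cap(\tau_1\cup\dots\cup\tau_{k-1})}\cdot\langle\cdot|v\rangle_{\tau_k}$ (pointwise operations on functions $\Pi\to\mathbb R$); then $\langle a|v\rangle_\delta=F_r(a)$.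 *)

theory Defs
  imports "HOL-Analysis.Analysis"
begin

type_synonym pt = "real \<times> real"

definition sarea :: "pt \<Rightarrow> pt \<Rightarrow> pt \<Rightarrow> real" where
  "sarea p q r = ((fst q - fst p) * (snd r - snd p) - (snd q - snd p) * (fst r - fst p)) / 2"

text \<open>Vertices v 0, ..., v (n-1) of a convex polygon, listed counterclockwise,
  all of them extreme points: every triple taken in the listing order is
  strictly positively oriented.\<close>
definition convex_polygon_ccw :: "(nat \<Rightarrow> pt) \<Rightarrow> nat \<Rightarrow> bool" where
  "convex_polygon_ccw v n \<longleftrightarrow> 3 \<le> n \<and>
     (\<forall>i j k. i < j \<and> j < k \<and> k < n \<longrightarrow> sarea (v i) (v j) (v k) > 0)"

definition polygon :: "(nat \<Rightarrow> pt) \<Rightarrow> nat \<Rightarrow> pt set" where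
  "polygon v n = convex hull (v ` {..<n})"

text \<open>A chord, encoded by its endpoint indices (i,j) with i < j: the two
  vertices are not adjacent on the boundary.\<close>
definition is_chord :: "nat \<Rightarrow> nat \<times> nat \<Rightarrow> bool" where
  "is_chord n c \<longleftrightarrow> fst c < snd c \<and> snd c < n \<and> snd c \<noteq> Suc (fst c)
      \<and> \<not> (fst c = 0 \<and> snd c = n - 1)"

definition chord_seg :: "(nat \<Rightarrow> pt) \<Rightarrow> nat \<times> nat \<Rightarrow> pt set" where
  "chord_seg v c = closed_segment (v (fst c)) (v (snd c))"

definition chordal_decomposition :: "(nat \<Rightarrow> pt) \<Rightarrow> nat \<Rightarrow> (nat \<times> nat) set \<Rightarrow> bool" where
  "chordal_decomposition v n \<delta> \<longleftrightarrow> finite \<delta> \<and> card \<delta> = n - 3 \<and> (\<forall>c\<in>\<delta>. is_chord n c) \<and>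
     (\<forall>c\<in>\<delta>. \<forall>d\<in>\<delta>. c \<noteq> d \<longrightarrow>
        chord_seg v c \<inter> chord_seg v d \<subseteq> {v (fst c), v (snd c)} \<inter> {v (fst d), v (snd d)})"

text \<open>Triangles are encoded by vertex index triples (a,b,c), a < b < c
  (hence counterclockwise).\<close>
definition tri :: "(nat \<Rightarrow> pt) \<Rightarrow> nat \<times> nat \<times> nat \<Rightarrow> pt set" where
  "tri v t = (case t of (a, b, c) \<Rightarrow> convex hull {v a, v b, v c})"

definition tri_vertex :: "nat \<Rightarrow> nat \<times> nat \<times> nat \<Rightarrow> bool" where
  "tri_vertex i t \<longleftrightarrow> (case t of (a, b, c) \<Rightarrow> i = a \<or> i = b \<or> i = c)"

text \<open>T_delta: the regions of the decomposition, i.e. the closed triangles with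
  vertices among the polygon vertices whose interior meets no chord of delta.\<close>
definition triangles :: "(nat \<Rightarrow> pt) \<Rightarrow> nat \<Rightarrow> (nat \<times> nat) set \<Rightarrow> (nat \<times> nat \<times> nat) set" where
  "triangles v n \<delta> = {(a, b, c). a < b \<and> b < c \<and> c < n \<and>
      (\<forall>d\<in>\<delta>. interior (tri v (a, b, c)) \<inter> chord_seg v d = {})}"

definition areal :: "(nat \<Rightarrow> pt) \<Rightarrow> nat \<times> nat \<times> nat \<Rightarrow> nat \<Rightarrow> pt \<Rightarrow> real" where
  "areal v t i x = (case t of (a, b, c) \<Rightarrow>
      (if i = a then sarea (v c) x (v b)
       else if i = b then sarea (v a) x (v c)
       else if i = c then sarea (v b) x (v a) else 0) / sarea (v a) (v b) (v c))"

text \<open>Chordal coordinate, given an enumeration ts = [tau_1,...,tau_r] of the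
  triangles containing v i:
  F_r = sum_k (1_{tau_k} - 1_{tau_k \<inter> (tau_1 \<union> ... \<union> tau_{k-1})}) * <.|v>_{tau_k}.\<close>
definition chordal_coord :: "(nat \<Rightarrow> pt) \<Rightarrow> (nat \<times> nat \<times> nat) list \<Rightarrow> nat \<Rightarrow> pt \<Rightarrow> real" where
  "chordal_coord v ts i x = (\<Sum>k<length ts.
      indicator (tri v (ts ! k)) x * areal v (ts ! k) i x
    - indicator (tri v (ts ! k) \<inter> (\<Union>l<k. tri v (ts ! l))) x * areal v (ts ! k) i x)"

end

theory Submission
  imports Defs
begin

text \<open>Call a triangle p < k < q a face if (p, q) is a chord of the decomposition or the closing
  edge (0, n - 1), and its two other sides are chords or edges of the polygon. The chords
  together with the closing edge form a maximal non-crossing family of diagonals, so every one of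
  them is the base of a face, and descending from the closing edge shows that every point a of the
  polygon lies in some face. Every region containing a assigns it the same areal coordinates as
  that face, so the sum defining the chordal coordinate telescopes to the areal coordinate of a in
  the face, and (a) and (b) become the barycentric identities of a single triangle.\<close>

section \<open>Signed area\<close>

lemma sarea_cycle: "sarea p q r = sarea q r p"
  by (simp add: sarea_def field_simps)

lemma sarea_swap12: "sarea q p r = - sarea p q r"
  by (simp add: sarea_def field_simps)

lemma sarea_swap23: "sarea p r q = - sarea p q r"
  by (simp add: sarea_def field_simps)

lemma sarea_degenerate [simp]: "sarea p p q = 0" "sarea p q p = 0" "sarea p q q = 0"
  by (simp_all add: sarea_def)

lemma sarea_affine:
  assumes "u + w = 1"
  shows "sarea p q (u *\<^sub>R x + w *\<^sub>R y) = u * sarea p q x + w * sarea p q y"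
proof -
  have u: "u = 1 - w" using assms by simp
  show ?thesis unfolding u by (simp add: sarea_def field_simps)
qed

lemma sarea_affine3:
  assumes "u + w + t = 1"
  shows "sarea p q (u *\<^sub>R x + w *\<^sub>R y + t *\<^sub>R z) = u * sarea p q x + w * sarea p q y + t * sarea p q z"
proof -
  have u: "u = 1 - w - t" using assms by simp
  show ?thesis unfolding u by (simp add: sarea_def field_simps)
qed

lemma sarea_barycentric: "sarea b c z + sarea c a z + sarea a b z = sarea a b c"
  by (simp add: sarea_def field_simps)

lemma sarea_barycentric_vector:
  "sarea b c z *\<^sub>R a + sarea c a z *\<^sub>R b + sarea a b z *\<^sub>R c = sarea a b c *\<^sub>R z"
  by (simp add: sarea_def prod_eq_iff field_simps)

lemma collinear_imp_sarea_eq_0: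
  assumes "collinear {p, q, r}"
  shows "sarea p q r = 0"
proof -
  obtain u where "\<forall>x\<in>{p, q, r}. \<forall>y\<in>{p, q, r}. \<exists>s. x - y = s *\<^sub>R u"
    using assms unfolding collinear_def by blast
  then obtain s t where "q - p = s *\<^sub>R u" "r - p = t *\<^sub>R u" by blast
  then have "fst q - fst p = s * fst u" "snd q - snd p = s * snd u"
    "fst r - fst p = t * fst u" "snd r - snd p = t * snd u"
    by (auto simp: prod_eq_iff)
  then show ?thesis by (simp add: sarea_def)
qed

lemma sarea_eq_0_on_line:
  fixes c :: pt
  assumes "c \<noteq> 0" "inner c p = b" "inner c q = b" "inner c r = b"
  shows "sarea p q r = 0"
proof (rule collinear_imp_sarea_eq_0)
  have "collinear {x :: pt. inner c x = b}"
    using assms(1) by (simp add: collinear_aff_dim)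
  then show "collinear {p, q, r}"
    by (rule collinear_subset) (use assms in auto)
qed

lemma convex_sarea_nonneg: "convex {z. 0 \<le> sarea p q z}"
  unfolding convex_def by (simp add: sarea_affine)

lemma convex_sarea_nonpos: "convex {z. sarea p q z \<le> 0}"
  using convex_sarea_nonneg[of q p] unfolding sarea_swap12[of q p] by simp

lemma closed_segments_intersect:
  assumes "sarea p3 p4 p1 * sarea p3 p4 p2 < 0" and "sarea p1 p2 p3 * sarea p1 p2 p4 < 0"
  shows "closed_segment p1 p2 \<inter> closed_segment p3 p4 \<noteq> {}"
proof -
  define D1 D2 E3 E4
    where "D1 = sarea p3 p4 p1" and "D2 = sarea p3 p4 p2"
      and "E3 = sarea p1 p2 p3" and "E4 = sarea p1 p2 p4"
  have cross: "E3 *\<^sub>R p4 - E4 *\<^sub>R p3 = - (D1 *\<^sub>R p2 - D2 *\<^sub>R p1)"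
    by (simp add: D1_def D2_def E3_def E4_def sarea_def prod_eq_iff algebra_simps
        diff_divide_distrib add_divide_distrib)
  have diff: "E3 - E4 = - (D1 - D2)"
    by (simp add: D1_def D2_def E3_def E4_def sarea_def algebra_simps diff_divide_distrib add_divide_distrib)
  have D: "D1 * D2 < 0" and E: "E3 * E4 < 0"
    using assms by (simp_all add: D1_def D2_def E3_def E4_def)
  then have "D1 \<noteq> D2" "E3 \<noteq> E4" by auto
  define t s where "t = D1 / (D1 - D2)" and "s = E3 / (E3 - E4)"
  have t: "0 \<le> t \<and> t \<le> 1" using D unfolding t_def by (auto simp: mult_less_0_iff divide_simps)
  have s: "0 \<le> s \<and> s \<le> 1" using E unfolding s_def by (auto simp: mult_less_0_iff divide_simps)
  have "(1 - t) *\<^sub>R p1 + t *\<^sub>R p2 = (1 / (D1 - D2)) *\<^sub>R (D1 *\<^sub>R p2 - D2 *\<^sub>R p1)"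
    using \<open>D1 \<noteq> D2\<close> by (simp add: t_def prod_eq_iff field_simps)
  also have "\<dots> = (1 / (E3 - E4)) *\<^sub>R (E3 *\<^sub>R p4 - E4 *\<^sub>R p3)"
    unfolding cross diff by (simp only: divide_minus_right scaleR_minus_left scaleR_minus_right minus_minus)
  also have "\<dots> = (1 - s) *\<^sub>R p3 + s *\<^sub>R p4"
    using \<open>E3 \<noteq> E4\<close> by (simp add: s_def prod_eq_iff field_simps)
  finally have eq: "(1 - t) *\<^sub>R p1 + t *\<^sub>R p2 = (1 - s) *\<^sub>R p3 + s *\<^sub>R p4" .
  have "(1 - t) *\<^sub>R p1 + t *\<^sub>R p2 \<in> closed_segment p1 p2"
    unfolding closed_segment_def using t by blast
  moreover have "(1 - t) *\<^sub>R p1 + t *\<^sub>R p2 \<in> closed_segment p3 p4"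
    unfolding eq closed_segment_def using s by blast
  ultimately show ?thesis by blast
qed

lemma sarea_convex_combination3:
  assumes "u + w + t = 1" and z: "z = u *\<^sub>R a + w *\<^sub>R b + t *\<^sub>R c"
  shows "sarea b c z = u * sarea a b c" "sarea c a z = w * sarea a b c" "sarea a b z = t * sarea a b c"
proof -
  have "sarea b c a = sarea a b c" "sarea c a b = sarea a b c"
    by (metis sarea_cycle)+
  then show "sarea b c z = u * sarea a b c" "sarea c a z = w * sarea a b c" "sarea a b z = t * sarea a b c"
    unfolding z sarea_affine3[OF \<open>u + w + t = 1\<close>] by simp_all
qed

lemma convex_combination_sarea_ratios:
  assumes "sarea a b c \<noteq> 0"
  shows "sarea b c z / sarea a b c + sarea c a z / sarea a b c + sarea a b z / sarea a b c = 1"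
    and "(sarea b c z / sarea a b c) *\<^sub>R a + (sarea c a z / sarea a b c) *\<^sub>R b
          + (sarea a b z / sarea a b c) *\<^sub>R c = z"
proof -
  show "sarea b c z / sarea a b c + sarea c a z / sarea a b c + sarea a b z / sarea a b c = 1"
    using assms sarea_barycentric[of b c z a] by (simp add: add_divide_distrib[symmetric])
  have "(sarea b c z / sarea a b c) *\<^sub>R a + (sarea c a z / sarea a b c) *\<^sub>R b
          + (sarea a b z / sarea a b c) *\<^sub>R c
      = (1 / sarea a b c) *\<^sub>R (sarea b c z *\<^sub>R a + sarea c a z *\<^sub>R b + sarea a b z *\<^sub>R c)"
    by (simp add: scaleR_add_right)
  then show "(sarea b c z / sarea a b c) *\<^sub>R a + (sarea c a z / sarea a b c) *\<^sub>R b
          + (sarea a b z / sarea a b c) *\<^sub>R c = z"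
    using assms by (simp add: sarea_barycentric_vector)
qed

lemma mem_convex_hull3_iff_sarea:
  assumes A: "0 < sarea a b c"
  shows "z \<in> convex hull {a, b, c} \<longleftrightarrow> 0 \<le> sarea b c z \<and> 0 \<le> sarea c a z \<and> 0 \<le> sarea a b z"
proof
  assume "z \<in> convex hull {a, b, c}"
  then obtain u w t where "0 \<le> u" "0 \<le> w" "0 \<le> t" "u + w + t = 1" "z = u *\<^sub>R a + w *\<^sub>R b + t *\<^sub>R c"
    unfolding convex_hull_3 by blast
  then show "0 \<le> sarea b c z \<and> 0 \<le> sarea c a z \<and> 0 \<le> sarea a b z"
    using sarea_convex_combination3 A by simp
next
  assume "0 \<le> sarea b c z \<and> 0 \<le> sarea c a z \<and> 0 \<le> sarea a b z"
  then have "0 \<le> sarea b c z / sarea a b c" "0 \<le> sarea c a z / sarea a b c" "0 \<le> sarea a b z / sarea a b c"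
    using A by simp_all
  moreover have "sarea b c z / sarea a b c + sarea c a z / sarea a b c + sarea a b z / sarea a b c = 1"
    "z = (sarea b c z / sarea a b c) *\<^sub>R a + (sarea c a z / sarea a b c) *\<^sub>R b
          + (sarea a b z / sarea a b c) *\<^sub>R c"
    using convex_combination_sarea_ratios[of a b c z] A by simp_all
  ultimately show "z \<in> convex hull {a, b, c}"
    unfolding convex_hull_3 by blast
qed

lemma interior_convex_hull3_sarea:
  assumes A: "0 < sarea a b c"
  shows "interior (convex hull {a, b, c}) = {z. 0 < sarea b c z \<and> 0 < sarea c a z \<and> 0 < sarea a b z}"
proof -
  have "\<not> collinear {a, b, c}" using A collinear_imp_sarea_eq_0 by fastforce
  then have I: "interior (convex hull {a, b, c}) = {z. \<exists>u w t. 0 < u \<and> 0 < w \<and> 0 < t \<and> u + w + t = 1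
      \<and> u *\<^sub>R a + w *\<^sub>R b + t *\<^sub>R c = z}"
    by (rule interior_convex_hull_3_minimal) simp
  show ?thesis unfolding I
  proof (intro set_eqI iffI)
    fix z assume "z \<in> {z. \<exists>u w t. 0 < u \<and> 0 < w \<and> 0 < t \<and> u + w + t = 1 \<and> u *\<^sub>R a + w *\<^sub>R b + t *\<^sub>R c = z}"
    then obtain u w t where "0 < u" "0 < w" "0 < t" "u + w + t = 1" "z = u *\<^sub>R a + w *\<^sub>R b + t *\<^sub>R c"
      by blast
    then show "z \<in> {z. 0 < sarea b c z \<and> 0 < sarea c a z \<and> 0 < sarea a b z}"
      using sarea_convex_combination3[of u w t z a b c] A by simp
  next
    fix z assume "z \<in> {z. 0 < sarea b c z \<and> 0 < sarea c a z \<and> 0 < sarea a b z}"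
    then have "0 < sarea b c z / sarea a b c" "0 < sarea c a z / sarea a b c" "0 < sarea a b z / sarea a b c"
      using A by simp_all
    moreover have "sarea b c z / sarea a b c + sarea c a z / sarea a b c + sarea a b z / sarea a b c = 1"
      "(sarea b c z / sarea a b c) *\<^sub>R a + (sarea c a z / sarea a b c) *\<^sub>R b
          + (sarea a b z / sarea a b c) *\<^sub>R c = z"
      using convex_combination_sarea_ratios[of a b c z] A by simp_all
    ultimately show "z \<in> {z. \<exists>u w t. 0 < u \<and> 0 < w \<and> 0 < t \<and> u + w + t = 1 \<and> u *\<^sub>R a + w *\<^sub>R b + t *\<^sub>R c = z}"
      by blast
  qed
qed

lemma interior_convex_hull3_nonempty:
  assumes A: "0 < sarea a b c"
  shows "interior (convex hull {a, b, c}) \<noteq> {}"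
proof -
  let ?z = "(1/3) *\<^sub>R a + (1/3) *\<^sub>R b + (1/3) *\<^sub>R c"
  have "?z \<in> interior (convex hull {a, b, c})"
    unfolding interior_convex_hull3_sarea[OF A]
    using sarea_convex_combination3[of "1/3" "1/3" "1/3" ?z a b c] A by simp
  then show ?thesis by blast
qed

lemma convex_hull3_in_closed_segment:
  assumes A: "0 < sarea a b c" and z: "z \<in> convex hull {a, b, c}" and "sarea a b z = 0"
  shows "z \<in> closed_segment a b"
proof -
  let ?u = "sarea b c z / sarea a b c" and ?w = "sarea c a z / sarea a b c"
  have "?u = 1 - ?w" "z = ?u *\<^sub>R a + ?w *\<^sub>R b"
    using convex_combination_sarea_ratios[of a b c z] A \<open>sarea a b z = 0\<close> by simp_all
  then have "z = (1 - ?w) *\<^sub>R a + ?w *\<^sub>R b" by simp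
  moreover have "0 \<le> ?u" "0 \<le> ?w" using z A unfolding mem_convex_hull3_iff_sarea[OF A] by simp_all
  ultimately show ?thesis unfolding closed_segment_def using \<open>?u = 1 - ?w\<close> by auto
qed

lemma frontier_convex_hull3_subset:
  assumes A: "0 < sarea a b c"
  shows "frontier (convex hull {a, b, c}) \<subseteq> closed_segment a b \<union> closed_segment b c \<union> closed_segment c a"
proof
  fix z assume "z \<in> frontier (convex hull {a, b, c})"
  then have z: "z \<in> convex hull {a, b, c}" "z \<notin> interior (convex hull {a, b, c})"
    by (simp_all add: frontier_def closure_closed compact_imp_closed finite_imp_compact_convex_hull)
  then have "sarea a b z = 0 \<or> sarea b c z = 0 \<or> sarea c a z = 0"
    unfolding mem_convex_hull3_iff_sarea[OF A] interior_convex_hull3_sarea[OF A] by auto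
  moreover have "z \<in> closed_segment b c" if "sarea b c z = 0"
  proof (rule convex_hull3_in_closed_segment[OF _ _ that])
    show "0 < sarea b c a" using A by (metis sarea_cycle)
    show "z \<in> convex hull {b, c, a}" using z(1) by (simp add: insert_commute)
  qed
  moreover have "z \<in> closed_segment c a" if "sarea c a z = 0"
  proof (rule convex_hull3_in_closed_segment[OF _ _ that])
    show "0 < sarea c a b" using A by (metis sarea_cycle)
    show "z \<in> convex hull {c, a, b}" using z(1) by (simp add: insert_commute)
  qed
  ultimately show "z \<in> closed_segment a b \<union> closed_segment b c \<union> closed_segment c a"
    using convex_hull3_in_closed_segment[OF A z(1)] by blast
qed

section \<open>Non-crossing families of chords\<close>

definition crosses :: "nat \<times> nat \<Rightarrow> nat \<times> nat \<Rightarrow> bool" where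
  "crosses c d \<longleftrightarrow> fst c < fst d \<and> fst d < snd c \<and> snd c < snd d"

definition noncrossing :: "(nat \<times> nat) set \<Rightarrow> bool" where
  "noncrossing S \<longleftrightarrow> (\<forall>c\<in>S. \<forall>d\<in>S. \<not> crosses c d)"

lemma noncrossing_insert:
  "noncrossing (insert c S) \<longleftrightarrow> noncrossing S \<and> (\<forall>d\<in>S. \<not> crosses c d \<and> \<not> crosses d c)"
  by (auto simp: noncrossing_def crosses_def)

text \<open>For a chord c of a subdivision S, apex S c is the third vertex of the region lying on
  the side of c towards the indices between its ends.\<close>
definition apex :: "(nat \<times> nat) set \<Rightarrow> nat \<times> nat \<Rightarrow> nat" where
  "apex S c = (let J = {j. (fst c, j) \<in> S \<and> j < snd c} in if J = {} then Suc (fst c) else Max J)"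

lemma apex_cases:
  assumes "finite S"
  obtains "apex S c = Suc (fst c)" and "\<forall>j. (fst c, j) \<in> S \<longrightarrow> snd c \<le> j"
  | "(fst c, apex S c) \<in> S" and "apex S c < snd c"
    and "\<forall>j. (fst c, j) \<in> S \<and> j < snd c \<longrightarrow> j \<le> apex S c"
proof -
  define J where "J = {j. (fst c, j) \<in> S \<and> j < snd c}"
  have "J \<subseteq> snd ` S" unfolding J_def by force
  then have "finite J" using assms finite_subset by blast
  show thesis
  proof (cases "J = {}")
    case True
    then have "apex S c = Suc (fst c)" unfolding apex_def J_def[symmetric] Let_def by simp
    moreover have "\<forall>j. (fst c, j) \<in> S \<longrightarrow> snd c \<le> j" using True unfolding J_def by auto
    ultimately show thesis using that(1) by blast
  next
    case False
    then have "apex S c = Max J" unfolding apex_def J_def[symmetric] Let_def by simp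
    moreover have "Max J \<in> J" "\<forall>j\<in>J. j \<le> Max J" using \<open>finite J\<close> False by simp_all
    ultimately show thesis using that(2) unfolding J_def by auto
  qed
qed

lemma apex_bounds:
  assumes "finite S" and "\<forall>d\<in>S. fst d + 2 \<le> snd d" and "fst c + 2 \<le> snd c"
  shows "fst c < apex S c" "apex S c < snd c"
proof -
  have "fst c < apex S c \<and> apex S c < snd c"
  proof (cases rule: apex_cases[OF assms(1), of c])
    case 1
    then show ?thesis using assms(3) by simp
  next
    case 2
    then show ?thesis using assms(2) by force
  qed
  then show "fst c < apex S c" "apex S c < snd c" by simp_all
qed

lemma apex_mem:
  assumes "finite S" and "apex S c \<noteq> Suc (fst c)"
  shows "(fst c, apex S c) \<in> S"
  using apex_cases[OF assms(1), of c] assms(2) by blast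

lemma apex_not_straddled:
  assumes "finite S" and "noncrossing S" and d: "d \<in> S" "d \<noteq> c"
    and nested: "fst c \<le> fst d" "snd d \<le> snd c"
  shows "\<not> (fst d < apex S c \<and> apex S c < snd d)"
proof
  assume straddle: "fst d < apex S c \<and> apex S c < snd d"
  have same_start: "(fst c, snd d) \<in> S \<and> snd d < snd c" if "fst d = fst c"
    using d nested that by (metis le_neq_implies_less prod.collapse)
  show False
  proof (cases rule: apex_cases[OF assms(1), of c])
    case 1
    then show False using same_start straddle nested by fastforce
  next
    case 2
    have "fst d \<noteq> fst c" using same_start straddle 2(3) by fastforce
    then have "crosses (fst c, apex S c) d" using straddle nested unfolding crosses_def by simp
    then show False using assms(2) d 2(1) unfolding noncrossing_def by blast
  qed
qed

lemma apex_side_not_crossed: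
  assumes "finite S" and "noncrossing S" and "c \<in> S" "d \<in> S" and "fst c < apex S c"
  shows "\<not> crosses (apex S c, snd c) d \<and> \<not> crosses d (apex S c, snd c)"
proof
  have cd: "\<not> crosses c d" "\<not> crosses d c" using assms(2-4) unfolding noncrossing_def by blast+
  then show "\<not> crosses (apex S c, snd c) d" using assms(5) unfolding crosses_def by auto
  show "\<not> crosses d (apex S c, snd c)"
  proof
    assume "crosses d (apex S c, snd c)"
    then have d: "fst d < apex S c" "apex S c < snd d" "snd d < snd c" by (simp_all add: crosses_def)
    then have "d \<noteq> c" by auto
    show False
    proof (cases "fst c \<le> fst d")
      case True
      then show False using apex_not_straddled[OF assms(1,2,4) \<open>d \<noteq> c\<close> True] d by simp
    next
      case False
      then have "crosses d c" using d assms(5) unfolding crosses_def by simp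
      then show False using cd by blast
    qed
  qed
qed

text \<open>The apex map is injective on S and takes its values among the N - 1 inner indices.\<close>
lemma card_noncrossing_le:
  assumes fin: "finite S" and bounds: "\<forall>c\<in>S. fst c + 2 \<le> snd c \<and> snd c \<le> N"
    and nc: "noncrossing S"
  shows "card S \<le> N - 1"
proof -
  have long: "\<forall>c\<in>S. fst c + 2 \<le> snd c" using bounds by blast
  have "inj_on (apex S) S"
  proof (rule inj_onI, rule ccontr)
    fix c d assume c: "c \<in> S" and d: "d \<in> S" and eq: "apex S c = apex S d" and "c \<noteq> d"
    have "fst c < apex S c" "apex S c < snd c" "fst d < apex S d" "apex S d < snd d"
      using apex_bounds[OF fin long] c d long by auto
    moreover have "\<not> crosses c d" "\<not> crosses d c" using nc c d unfolding noncrossing_def by blast+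
    moreover have "fst c \<le> fst d \<Longrightarrow> snd d \<le> snd c \<Longrightarrow> \<not> (fst d < apex S c \<and> apex S c < snd d)"
      "fst d \<le> fst c \<Longrightarrow> snd c \<le> snd d \<Longrightarrow> \<not> (fst c < apex S d \<and> apex S d < snd c)"
      using apex_not_straddled[OF fin nc] c d \<open>c \<noteq> d\<close> by auto
    ultimately show False using eq unfolding crosses_def by linarith
  qed
  moreover have "apex S ` S \<subseteq> {1..<N}"
    using apex_bounds[OF fin long] bounds by fastforce
  ultimately have "card S \<le> card {1..<N}"
    by (metis card_image card_mono finite_atLeastLessThan)
  then show ?thesis by simp
qed

section \<open>Convex polygons\<close>

lemma areal_vertices:
  assumes "a < b" "b < c"
  shows "areal v (a, b, c) a z = sarea (v b) (v c) z / sarea (v a) (v b) (v c)"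
    and "areal v (a, b, c) b z = sarea (v c) (v a) z / sarea (v a) (v b) (v c)"
    and "areal v (a, b, c) c z = sarea (v a) (v b) z / sarea (v a) (v b) (v c)"
proof -
  have "sarea (v c) z (v b) = sarea (v b) (v c) z" "sarea (v a) z (v c) = sarea (v c) (v a) z"
    "sarea (v b) z (v a) = sarea (v a) (v b) z"
    by (metis sarea_cycle)+
  then show "areal v (a, b, c) a z = sarea (v b) (v c) z / sarea (v a) (v b) (v c)"
    and "areal v (a, b, c) b z = sarea (v c) (v a) z / sarea (v a) (v b) (v c)"
    and "areal v (a, b, c) c z = sarea (v a) (v b) z / sarea (v a) (v b) (v c)"
    using assms by (simp_all add: areal_def)
qed

definition bary :: "(nat \<Rightarrow> pt) \<Rightarrow> nat \<times> nat \<times> nat \<Rightarrow> pt \<Rightarrow> nat \<Rightarrow> real" where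
  "bary v t x i = (if tri_vertex i t then areal v t i x else 0)"

text \<open>Both ends of d lie on one of the three boundary arcs into which the vertices
  a < b < c cut the polygon.\<close>
definition in_arc :: "nat \<Rightarrow> nat \<Rightarrow> nat \<Rightarrow> nat \<times> nat \<Rightarrow> bool" where
  "in_arc a b c d \<longleftrightarrow> (a \<le> fst d \<and> snd d \<le> b) \<or> (b \<le> fst d \<and> snd d \<le> c) \<or>
     ((fst d \<le> a \<or> c \<le> fst d) \<and> (snd d \<le> a \<or> c \<le> snd d))"

locale ccw_polygon =
  fixes v :: "nat \<Rightarrow> pt" and n :: nat
  assumes ccw: "convex_polygon_ccw v n"
begin

lemma three_le_n: "3 \<le> n"
  using ccw by (simp add: convex_polygon_ccw_def)

lemma sarea_vertices_pos: "i < j \<Longrightarrow> j < k \<Longrightarrow> k < n \<Longrightarrow> 0 < sarea (v i) (v j) (v k)"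
  using ccw by (simp add: convex_polygon_ccw_def)

lemma sarea_vertices_pos_outside:
  assumes "u < w" "w < n" "m < n" "m < u \<or> w < m"
  shows "0 < sarea (v u) (v w) (v m)"
  using assms sarea_vertices_pos[of m u w] sarea_vertices_pos[of u w m] sarea_cycle[of "v m" "v u" "v w"]
  by auto

lemma sarea_vertices_nonneg_outside:
  assumes "u < w" "w < n" "m < n" "m \<le> u \<or> w \<le> m"
  shows "0 \<le> sarea (v u) (v w) (v m)"
  using assms sarea_vertices_pos_outside[of u w m] by (cases "m = u \<or> m = w") auto

lemma sarea_vertices_neg_between:
  assumes "u < m" "m < w" "w < n"
  shows "sarea (v u) (v w) (v m) < 0"
  using assms sarea_vertices_pos[of u m w] sarea_swap23[of "v u" "v m" "v w"] by simp

lemma sarea_vertices_nonpos_between: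
  assumes "u \<le> m" "m \<le> w" "w < n"
  shows "sarea (v u) (v w) (v m) \<le> 0"
  using assms sarea_vertices_neg_between[of u m w] by (cases "m = u \<or> m = w") auto

lemma sarea_vertices_neq_0:
  assumes "i < n" "j < n" "k < n" "i \<noteq> j" "i \<noteq> k" "j \<noteq> k"
  shows "sarea (v i) (v j) (v k) \<noteq> 0"
proof -
  have "sarea (v a) (v b) (v c) \<noteq> 0" if "a < b" "b < c" "c < n" for a b c
    using sarea_vertices_pos[OF that] by simp
  then show ?thesis
    using assms sarea_cycle sarea_swap23 by (smt (verit, best) linorder_neqE_nat)
qed

lemma inj_on_vertices: "inj_on v {..<n}"
proof (rule inj_onI, rule ccontr)
  fix i j assume i: "i \<in> {..<n}" and j: "j \<in> {..<n}" and "v i = v j" "i \<noteq> j"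
  have "\<exists>k\<in>{0, 1, 2 :: nat}. k \<noteq> i \<and> k \<noteq> j" by auto
  then obtain k where "k \<in> {0, 1, 2}" "k \<noteq> i" "k \<noteq> j" by blast
  moreover have "k < n" using calculation(1) three_le_n by auto
  ultimately have "sarea (v i) (v j) (v k) \<noteq> 0"
    using sarea_vertices_neq_0 i j \<open>i \<noteq> j\<close> by simp
  then show False using \<open>v i = v j\<close> by simp
qed

lemma closed_segments_vertices_intersect:
  assumes "i < k" "k < j" "j < l" "l < n"
  shows "closed_segment (v i) (v j) \<inter> closed_segment (v k) (v l) \<noteq> {}"
proof (rule closed_segments_intersect)
  show "sarea (v k) (v l) (v i) * sarea (v k) (v l) (v j) < 0"
    using sarea_vertices_pos_outside[of k l i] sarea_vertices_neg_between[of k j l] assms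
    by (simp add: mult_pos_neg)
  show "sarea (v i) (v j) (v k) * sarea (v i) (v j) (v l) < 0"
    using sarea_vertices_pos_outside[of i j l] sarea_vertices_neg_between[of i k j] assms
    by (simp add: mult_neg_pos)
qed

lemma mem_tri_iff:
  assumes "a < b" "b < c" "c < n"
  shows "z \<in> tri v (a, b, c) \<longleftrightarrow>
    0 \<le> sarea (v a) (v b) z \<and> 0 \<le> sarea (v b) (v c) z \<and> 0 \<le> sarea (v c) (v a) z"
  unfolding tri_def using mem_convex_hull3_iff_sarea[OF sarea_vertices_pos[OF assms]] by auto

lemma interior_tri:
  assumes "a < b" "b < c" "c < n"
  shows "interior (tri v (a, b, c)) =
    {z. 0 < sarea (v a) (v b) z \<and> 0 < sarea (v b) (v c) z \<and> 0 < sarea (v c) (v a) z}"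
  unfolding tri_def using interior_convex_hull3_sarea[OF sarea_vertices_pos[OF assms]] by auto

lemma interior_tri_nonempty:
  assumes "a < b" "b < c" "c < n"
  shows "interior (tri v (a, b, c)) \<noteq> {}"
  unfolding tri_def using interior_convex_hull3_nonempty[OF sarea_vertices_pos[OF assms]] by simp

lemma sum_bary:
  assumes "a < b" "b < c" "c < n"
  shows "(\<Sum>i<n. bary v (a, b, c) z i) = 1" and "(\<Sum>i<n. bary v (a, b, c) z i *\<^sub>R v i) = z"
proof -
  have A: "sarea (v a) (v b) (v c) \<noteq> 0" using sarea_vertices_pos[OF assms] by simp
  have sub: "{a, b, c} \<subseteq> {..<n}" using assms by auto
  have off: "\<forall>i\<in>{..<n} - {a, b, c}. bary v (a, b, c) z i = 0"
    by (auto simp: bary_def tri_vertex_def)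
  have "(\<Sum>i<n. bary v (a, b, c) z i) = (\<Sum>i\<in>{a, b, c}. bary v (a, b, c) z i)"
    by (rule sum.mono_neutral_right[OF _ sub off]) simp
  also have "\<dots> = 1"
    using assms convex_combination_sarea_ratios(1)[OF A, of z]
    by (simp add: bary_def tri_vertex_def areal_vertices)
  finally show "(\<Sum>i<n. bary v (a, b, c) z i) = 1" .
  have "(\<Sum>i<n. bary v (a, b, c) z i *\<^sub>R v i) = (\<Sum>i\<in>{a, b, c}. bary v (a, b, c) z i *\<^sub>R v i)"
    by (rule sum.mono_neutral_right[OF _ sub]) (use off in simp_all)
  also have "\<dots> = z"
    using assms convex_combination_sarea_ratios(2)[OF A, of z]
    by (simp add: bary_def tri_vertex_def areal_vertices add.assoc)
  finally show "(\<Sum>i<n. bary v (a, b, c) z i *\<^sub>R v i) = z" .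
qed

lemma bary_nonneg:
  assumes "a < b" "b < c" "c < n" "z \<in> tri v (a, b, c)"
  shows "0 \<le> bary v (a, b, c) z i"
  using assms mem_tri_iff[OF assms(1-3)] sarea_vertices_pos[OF assms(1-3)]
  by (auto simp: bary_def tri_vertex_def areal_vertices)

lemma interior_tri_disjoint_arc_segment:
  assumes abc: "a < b" "b < c" "c < n" and d: "fst d \<le> snd d" "snd d < n" and "in_arc a b c d"
  shows "interior (tri v (a, b, c)) \<inter> closed_segment (v (fst d)) (v (snd d)) = {}"
proof -
  let ?seg = "closed_segment (v (fst d)) (v (snd d))"
  have "?seg \<subseteq> {z. sarea (v a) (v b) z \<le> 0} \<or> ?seg \<subseteq> {z. sarea (v b) (v c) z \<le> 0}
      \<or> ?seg \<subseteq> {z. sarea (v c) (v a) z \<le> 0}"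
  proof -
    consider "a \<le> fst d \<and> snd d \<le> b" | "b \<le> fst d \<and> snd d \<le> c"
      | "(fst d \<le> a \<or> c \<le> fst d) \<and> (snd d \<le> a \<or> c \<le> snd d)"
      using \<open>in_arc a b c d\<close> unfolding in_arc_def by blast
    then show ?thesis
    proof cases
      case 1
      then have "sarea (v a) (v b) (v (fst d)) \<le> 0" "sarea (v a) (v b) (v (snd d)) \<le> 0"
        using sarea_vertices_nonpos_between abc d by auto
      then show ?thesis using closed_segment_subset[OF _ _ convex_sarea_nonpos] by blast
    next
      case 2
      then have "sarea (v b) (v c) (v (fst d)) \<le> 0" "sarea (v b) (v c) (v (snd d)) \<le> 0"
        using sarea_vertices_nonpos_between abc d by auto
      then show ?thesis using closed_segment_subset[OF _ _ convex_sarea_nonpos] by blast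
    next
      case 3
      then have "0 \<le> sarea (v a) (v c) (v (fst d))" "0 \<le> sarea (v a) (v c) (v (snd d))"
        using sarea_vertices_nonneg_outside abc d by auto
      then have "sarea (v c) (v a) (v (fst d)) \<le> 0" "sarea (v c) (v a) (v (snd d)) \<le> 0"
        using sarea_swap12[of "v c" "v a"] by simp_all
      then show ?thesis using closed_segment_subset[OF _ _ convex_sarea_nonpos] by blast
    qed
  qed
  then show ?thesis unfolding interior_tri[OF abc] by auto
qed

lemma interior_tri_disjoint_edge:
  assumes "a < b" "b < c" "c < n" "Suc m < n"
  shows "interior (tri v (a, b, c)) \<inter> closed_segment (v m) (v (Suc m)) = {}"
  using interior_tri_disjoint_arc_segment[OF assms(1-3), of "(m, Suc m)"] assms
  unfolding in_arc_def by fastforce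

lemma interior_tri_disjoint_closing_edge:
  assumes "a < b" "b < c" "c < n"
  shows "interior (tri v (a, b, c)) \<inter> closed_segment (v 0) (v (n - 1)) = {}"
  using interior_tri_disjoint_arc_segment[OF assms, of "(0, n - 1)"] assms
  unfolding in_arc_def by fastforce

lemma polygon_sarea_nonneg:
  assumes "\<forall>j<n. 0 \<le> sarea p q (v j)" and "z \<in> polygon v n"
  shows "0 \<le> sarea p q z"
proof -
  have "convex hull (v ` {..<n}) \<subseteq> {z. 0 \<le> sarea p q z}"
    using assms(1) by (intro hull_minimal convex_sarea_nonneg) auto
  then show ?thesis using assms(2) unfolding polygon_def by auto
qed

lemma polygon_left_of_edge:
  assumes "Suc m < n" "z \<in> polygon v n"
  shows "0 \<le> sarea (v m) (v (Suc m)) z"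
proof (rule polygon_sarea_nonneg[OF _ assms(2)], intro allI impI)
  fix j assume "j < n"
  then show "0 \<le> sarea (v m) (v (Suc m)) (v j)"
    using sarea_vertices_nonneg_outside[of m "Suc m" j] assms(1) by linarith
qed

lemma polygon_left_of_closing_edge:
  assumes "z \<in> polygon v n"
  shows "0 \<le> sarea (v (n - 1)) (v 0) z"
proof (rule polygon_sarea_nonneg[OF _ assms], intro allI impI)
  fix j assume "j < n"
  then have "sarea (v 0) (v (n - 1)) (v j) \<le> 0"
    using sarea_vertices_nonpos_between[of 0 j "n - 1"] by simp
  then show "0 \<le> sarea (v (n - 1)) (v 0) (v j)"
    using sarea_swap12[of "v (n - 1)" "v 0" "v j"] by simp
qed

lemma vertex_mem_tri_imp:
  assumes pkq: "p < k" "k < q" "q < n" and "j < n" and "v j \<in> tri v (p, k, q)"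
  shows "j = p \<or> j = k \<or> j = q"
proof (rule ccontr)
  assume "\<not> (j = p \<or> j = k \<or> j = q)"
  then consider "j < p \<or> q < j" | "p < j \<and> j < k" | "k < j \<and> j < q" by linarith
  moreover have "0 \<le> sarea (v p) (v k) (v j)" "0 \<le> sarea (v k) (v q) (v j)" "0 \<le> sarea (v q) (v p) (v j)"
    using assms mem_tri_iff[OF pkq] by simp_all
  moreover note sarea_vertices_pos_outside[of p q j] sarea_swap12[of "v q" "v p" "v j"]
    sarea_vertices_neg_between[of p j k] sarea_vertices_neg_between[of k j q]
  ultimately show False using assms by (cases; auto)
qed

lemma closed_tri: "closed (tri v t)"
  by (simp add: tri_def compact_imp_closed finite_imp_compact_convex_hull split: prod.split)

lemma convex_tri: "convex (tri v t)"
  by (simp add: tri_def split: prod.split)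

lemma closure_interior_tri:
  assumes "a < b" "b < c" "c < n"
  shows "closure (interior (tri v (a, b, c))) = tri v (a, b, c)"
  using convex_closure_interior[OF convex_tri interior_tri_nonempty[OF assms]] closed_tri
  by (simp add: closure_closed)

lemma vertices_on_line:
  fixes c :: pt
  assumes "c \<noteq> 0"
  obtains i i' where "i < n" "i' < n" "{j. j < n \<and> inner c (v j) = b} \<subseteq> {i, i'}"
proof -
  let ?L = "{j. j < n \<and> inner c (v j) = b}"
  show thesis
  proof (cases "?L = {}")
    case True
    then show thesis using that[of 0 0] three_le_n by auto
  next
    case False
    then obtain i where i: "i \<in> ?L" by blast
    show thesis
    proof (cases "?L \<subseteq> {i}")
      case True
      then show thesis using that[of i i] i by simp
    next
      case False
      then obtain i' where i': "i' \<in> ?L" "i' \<noteq> i" by blast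
      have "j \<in> {i, i'}" if "j \<in> ?L" for j
      proof (rule ccontr)
        assume "j \<notin> {i, i'}"
        then have "sarea (v i) (v i') (v j) \<noteq> 0" using sarea_vertices_neq_0 i i' that by auto
        moreover have "sarea (v i) (v i') (v j) = 0" using sarea_eq_0_on_line[OF assms] i i' that by auto
        ultimately show False by simp
      qed
      then show thesis using that i i' by blast
    qed
  qed
qed

lemma vertex_weights_unique_on_line:
  fixes c :: pt and \<alpha> \<beta> :: "nat \<Rightarrow> real"
  assumes "c \<noteq> 0"
    and \<alpha>: "\<And>j. \<alpha> j \<noteq> 0 \<Longrightarrow> j < n \<and> inner c (v j) = b"
    and \<beta>: "\<And>j. \<beta> j \<noteq> 0 \<Longrightarrow> j < n \<and> inner c (v j) = b"
    and sum: "(\<Sum>j<n. \<alpha> j) = (\<Sum>j<n. \<beta> j)"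
    and vec: "(\<Sum>j<n. \<alpha> j *\<^sub>R v j) = (\<Sum>j<n. \<beta> j *\<^sub>R v j)"
  shows "\<alpha> = \<beta>"
proof -
  obtain i i' where "i < n" "i' < n" and L: "{j. j < n \<and> inner c (v j) = b} \<subseteq> {i, i'}"
    using vertices_on_line[OF assms(1)] by blast
  define D where "D j = \<alpha> j - \<beta> j" for j
  have off: "D j = 0" if "j \<notin> {i, i'}" for j
    using L \<alpha>[of j] \<beta>[of j] that unfolding D_def by fastforce
  have sub: "{i, i'} \<subseteq> {..<n}" using \<open>i < n\<close> \<open>i' < n\<close> by simp
  have "(\<Sum>j<n. D j) = 0" "(\<Sum>j<n. D j *\<^sub>R v j) = 0"
    using sum vec unfolding D_def by (simp_all add: sum_subtractf scaleR_diff_left)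
  moreover have "(\<Sum>j<n. D j) = (\<Sum>j\<in>{i, i'}. D j)"
    by (rule sum.mono_neutral_right[OF _ sub]) (use off in auto)
  moreover have "(\<Sum>j<n. D j *\<^sub>R v j) = (\<Sum>j\<in>{i, i'}. D j *\<^sub>R v j)"
    by (rule sum.mono_neutral_right[OF _ sub]) (use off in auto)
  ultimately have sum2: "(\<Sum>j\<in>{i, i'}. D j) = 0" and vec2: "(\<Sum>j\<in>{i, i'}. D j *\<^sub>R v j) = 0"
    by simp_all
  have "D i = 0 \<and> D i' = 0"
  proof (cases "i = i'")
    case True
    then show ?thesis using sum2 by simp
  next
    case False
    then have "D i' = - D i" "D i *\<^sub>R v i + D i' *\<^sub>R v i' = 0" using sum2 vec2 by simp_all
    then have "D i *\<^sub>R (v i - v i') = 0" by (simp add: scaleR_diff_right)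
    moreover have "v i \<noteq> v i'"
      using inj_on_vertices False \<open>i < n\<close> \<open>i' < n\<close> by (auto dest: inj_onD)
    ultimately show ?thesis using \<open>D i' = - D i\<close> by simp
  qed
  then have "D j = 0" for j using off by (cases "j \<in> {i, i'}") auto
  then show ?thesis unfolding D_def by auto
qed

lemma bary_vanishes_off_supporting_line:
  fixes c :: pt
  assumes pkq: "p < k" "k < q" "q < n"
    and half: "tri v (p, k, q) \<subseteq> {w. inner c w \<le> b}"
    and a: "a \<in> tri v (p, k, q)" "inner c a = b"
    and j: "bary v (p, k, q) a j \<noteq> 0"
  shows "j < n \<and> inner c (v j) = b"
proof -
  let ?\<alpha> = "bary v (p, k, q) a"
  have vertex: "i \<in> {p, k, q}" if "?\<alpha> i \<noteq> 0" for i
    using that by (auto simp: bary_def tri_vertex_def split: if_splits)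
  have "(\<Sum>i<n. ?\<alpha> i * (b - inner c (v i))) = b * (\<Sum>i<n. ?\<alpha> i) - inner c (\<Sum>i<n. ?\<alpha> i *\<^sub>R v i)"
    by (simp add: sum_distrib_left inner_sum_right sum_subtractf algebra_simps)
  also have "\<dots> = 0" using sum_bary[OF pkq] a by simp
  finally have "(\<Sum>i<n. ?\<alpha> i * (b - inner c (v i))) = 0" .
  moreover have "0 \<le> ?\<alpha> i * (b - inner c (v i))" for i
  proof (cases "?\<alpha> i = 0")
    case False
    then have "v i \<in> tri v (p, k, q)" using vertex unfolding tri_def by (auto intro: hull_inc)
    then show ?thesis using half bary_nonneg[OF pkq a(1)] by auto
  qed simp
  moreover have "j < n" using vertex[OF j] pkq by auto
  ultimately have "?\<alpha> j * (b - inner c (v j)) = 0"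
    using sum_nonneg_eq_0_iff[of "{..<n}" "\<lambda>i. ?\<alpha> i * (b - inner c (v i))"] by simp
  then show ?thesis using \<open>j < n\<close> j by simp
qed

text \<open>A line separating the two interiors passes through a, and the areal coordinates of a
  in either triangle are supported on the vertices lying on that line.\<close>
lemma bary_eq_if_interiors_disjoint:
  assumes xyz: "x < y" "y < z" "z < n" and pkq: "p < k" "k < q" "q < n"
    and disj: "interior (tri v (x, y, z)) \<inter> interior (tri v (p, k, q)) = {}"
    and a: "a \<in> tri v (x, y, z)" "a \<in> tri v (p, k, q)"
  shows "bary v (x, y, z) a = bary v (p, k, q) a"
proof -
  obtain c :: pt and b where "c \<noteq> 0"
    and le: "\<forall>w\<in>interior (tri v (p, k, q)). inner c w \<le> b"
    and ge: "\<forall>w\<in>interior (tri v (x, y, z)). b \<le> inner c w"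
    using separating_hyperplane_sets[OF convex_interior[OF convex_tri] convex_interior[OF convex_tri]
        interior_tri_nonempty[OF pkq] interior_tri_nonempty[OF xyz]] disj
    by (metis inf_commute)
  have "closure (interior (tri v (p, k, q))) \<subseteq> {w. inner c w \<le> b}"
    using closure_minimal[OF _ closed_halfspace_le] le by blast
  then have T0: "tri v (p, k, q) \<subseteq> {w. inner c w \<le> b}"
    by (simp only: closure_interior_tri[OF pkq])
  have "closure (interior (tri v (x, y, z))) \<subseteq> {w. b \<le> inner c w}"
    using closure_minimal[OF _ closed_halfspace_ge] ge by blast
  then have T: "tri v (x, y, z) \<subseteq> {w. inner (- c) w \<le> - b}"
    by (simp only: closure_interior_tri[OF xyz]) auto
  have "inner c a = b" using a T0 T by force
  show ?thesis
  proof (rule sym, rule vertex_weights_unique_on_line[OF \<open>c \<noteq> 0\<close>])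
    show "bary v (p, k, q) a j \<noteq> 0 \<Longrightarrow> j < n \<and> inner c (v j) = b" for j
      using bary_vanishes_off_supporting_line[OF pkq T0 a(2) \<open>inner c a = b\<close>] by blast
    show "bary v (x, y, z) a j \<noteq> 0 \<Longrightarrow> j < n \<and> inner c (v j) = b" for j
      using bary_vanishes_off_supporting_line[OF xyz T a(1)] \<open>inner c a = b\<close> by fastforce
  qed (simp_all add: sum_bary pkq xyz)
qed

lemma tri_eq_if_interior_subset:
  assumes xyz: "x < y" "y < z" "z < n" and pkq: "p < k" "k < q" "q < n"
    and sub: "interior (tri v (x, y, z)) \<subseteq> tri v (p, k, q)"
  shows "(x, y, z) = (p, k, q)"
proof -
  have "tri v (x, y, z) \<subseteq> tri v (p, k, q)"
    using closure_minimal[OF sub closed_tri] closure_interior_tri[OF xyz] by simp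
  then have "v x \<in> tri v (p, k, q)" "v y \<in> tri v (p, k, q)" "v z \<in> tri v (p, k, q)"
    unfolding tri_def by (auto intro: hull_inc)
  then have "x \<in> {p, k, q}" "y \<in> {p, k, q}" "z \<in> {p, k, q}"
    using vertex_mem_tri_imp[OF pkq] xyz by auto
  then show ?thesis using xyz pkq by auto
qed

end

section \<open>Chordal decompositions\<close>

lemma sum_indicator_telescope:
  fixes S :: "nat \<Rightarrow> 'a set" and f :: "nat \<Rightarrow> real"
  assumes "\<And>k. k < m \<Longrightarrow> x \<in> S k \<Longrightarrow> f k = c"
  shows "(\<Sum>k<m. indicator (S k) x * f k - indicator (S k \<inter> (\<Union>l<k. S l)) x * f k)
       = (if \<exists>k<m. x \<in> S k then c else 0)"
  using assms
proof (induction m)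
  case (Suc m)
  have "(\<exists>k<Suc m. x \<in> S k) \<longleftrightarrow> (\<exists>k<m. x \<in> S k) \<or> x \<in> S m" by (auto simp: less_Suc_eq)
  then show ?case using Suc by (auto simp: indicator_def)
qed simp

locale chordal_polygon = ccw_polygon +
  fixes \<delta> :: "(nat \<times> nat) set"
  assumes decomposition: "chordal_decomposition v n \<delta>"
begin

lemma finite_chords: "finite \<delta>" and card_chords: "card \<delta> = n - 3"
  using decomposition by (auto simp: chordal_decomposition_def)

lemma chord_bounds: "c \<in> \<delta> \<Longrightarrow> fst c + 2 \<le> snd c \<and> snd c < n \<and> c \<noteq> (0, n - 1)"
  using decomposition unfolding chordal_decomposition_def is_chord_def by fastforce

lemma chords_not_crossing:
  assumes "c \<in> \<delta>" "d \<in> \<delta>"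
  shows "\<not> crosses c d"
proof
  assume cr: "crosses c d"
  then have "c \<noteq> d" by (auto simp: crosses_def)
  then have "chord_seg v c \<inter> chord_seg v d \<subseteq> {v (fst c), v (snd c)} \<inter> {v (fst d), v (snd d)}"
    using decomposition assms unfolding chordal_decomposition_def by blast
  moreover have "{v (fst c), v (snd c)} \<inter> {v (fst d), v (snd d)} = {}"
    using inj_on_vertices cr chord_bounds[OF assms(2)] unfolding crosses_def
    by (auto dest: inj_onD)
  moreover have "chord_seg v c \<inter> chord_seg v d \<noteq> {}"
    using closed_segments_vertices_intersect cr chord_bounds[OF assms(2)]
    unfolding chord_seg_def crosses_def by simp
  ultimately show False by blast
qed

text \<open>Adjoining the closing edge (0, n - 1) to the chords gives n - 2 non-crossing diagonals,
  the maximum allowed by card_noncrossing_le.\<close>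
definition ext_chords :: "(nat \<times> nat) set" where
  "ext_chords = insert (0, n - 1) \<delta>"

lemma finite_ext_chords: "finite ext_chords"
  by (simp add: ext_chords_def finite_chords)

lemma ext_chord_bounds: "c \<in> ext_chords \<Longrightarrow> fst c + 2 \<le> snd c \<and> snd c < n"
  using chord_bounds three_le_n unfolding ext_chords_def by (cases "c = (0, n - 1)") auto

lemma noncrossing_ext_chords: "noncrossing ext_chords"
proof -
  have "\<not> crosses (0, n - 1) d \<and> \<not> crosses d (0, n - 1)" if "d \<in> \<delta>" for d
    using chord_bounds[OF that] unfolding crosses_def by auto
  moreover have "noncrossing \<delta>" using chords_not_crossing unfolding noncrossing_def by blast
  ultimately show ?thesis unfolding ext_chords_def noncrossing_insert by blast
qed

lemma ext_chord_maximal: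
  assumes "k + 2 \<le> q" "q < n" and "\<forall>d\<in>ext_chords. \<not> crosses (k, q) d \<and> \<not> crosses d (k, q)"
  shows "(k, q) \<in> ext_chords"
proof (rule ccontr)
  assume new: "(k, q) \<notin> ext_chords"
  have "(0, n - 1) \<notin> \<delta>" using chord_bounds by blast
  then have "card (insert (k, q) ext_chords) = n - 1"
    using new finite_chords card_chords three_le_n unfolding ext_chords_def by simp
  moreover have "card (insert (k, q) ext_chords) \<le> (n - 1) - 1"
  proof (rule card_noncrossing_le)
    show "finite (insert (k, q) ext_chords)" by (simp add: finite_ext_chords)
    show "\<forall>c\<in>insert (k, q) ext_chords. fst c + 2 \<le> snd c \<and> snd c \<le> n - 1"
      using ext_chord_bounds assms(1,2) by fastforce
    show "noncrossing (insert (k, q) ext_chords)"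
      using assms(3) noncrossing_ext_chords by (simp add: noncrossing_insert)
  qed
  ultimately show False using three_le_n by simp
qed

definition is_side :: "nat \<Rightarrow> nat \<Rightarrow> bool" where
  "is_side p k \<longleftrightarrow> k = Suc p \<or> (p, k) \<in> ext_chords"

lemma ext_chord_apex:
  assumes pq: "(p, q) \<in> ext_chords"
  obtains k where "p < k" "k < q" "is_side p k" "is_side k q"
proof -
  let ?k = "apex ext_chords (p, q)"
  have long: "\<forall>d\<in>ext_chords. fst d + 2 \<le> snd d" using ext_chord_bounds by blast
  have k: "p < ?k" "?k < q"
    using apex_bounds[OF finite_ext_chords long, of "(p, q)"] ext_chord_bounds[OF pq] by simp_all
  have "is_side p ?k" using apex_mem[OF finite_ext_chords, of "(p, q)"] unfolding is_side_def by auto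
  moreover have "is_side ?k q"
  proof (cases "q = Suc ?k")
    case False
    have "(?k, q) \<in> ext_chords"
    proof (rule ext_chord_maximal)
      show "?k + 2 \<le> q" using False k by simp
      show "q < n" using ext_chord_bounds[OF pq] by simp
      show "\<forall>d\<in>ext_chords. \<not> crosses (?k, q) d \<and> \<not> crosses d (?k, q)"
        using apex_side_not_crossed[OF finite_ext_chords noncrossing_ext_chords pq] k by simp
    qed
    then show ?thesis unfolding is_side_def by simp
  qed (simp add: is_side_def)
  ultimately show thesis using that k by blast
qed

definition face :: "nat \<Rightarrow> nat \<Rightarrow> nat \<Rightarrow> bool" where
  "face p k q \<longleftrightarrow> p < k \<and> k < q \<and> (p, q) \<in> ext_chords \<and> is_side p k \<and> is_side k q"

lemma face_bounds: "face p k q \<Longrightarrow> p < k \<and> k < q \<and> q < n"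
  unfolding face_def using ext_chord_bounds by fastforce

lemma chord_in_arc_of_face:
  assumes face: "face p k q" and d: "d \<in> \<delta>"
  shows "in_arc p k q d"
proof -
  have nc: "\<not> crosses c d \<and> \<not> crosses d c" if "c \<in> ext_chords" for c
    using noncrossing_ext_chords that d unfolding noncrossing_def ext_chords_def by blast
  have "\<not> crosses (p, q) d" "\<not> crosses d (p, q)" using face nc unfolding face_def by blast+
  moreover have "\<not> crosses (p, k) d" using face nc unfolding face_def is_side_def crosses_def by auto
  moreover have "\<not> crosses d (k, q)" using face nc unfolding face_def is_side_def crosses_def by auto
  moreover have "fst d < snd d" "p < k" "k < q" using chord_bounds[OF d] face unfolding face_def by auto
  ultimately show ?thesis unfolding in_arc_def crosses_def fst_conv snd_conv by presburger
qed

lemma face_in_triangles: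
  assumes "face p k q"
  shows "(p, k, q) \<in> triangles v n \<delta>"
proof -
  have pkq: "p < k" "k < q" "q < n" using face_bounds[OF assms] by auto
  have "interior (tri v (p, k, q)) \<inter> chord_seg v d = {}" if "d \<in> \<delta>" for d
    using interior_tri_disjoint_arc_segment[OF pkq _ _ chord_in_arc_of_face[OF assms that]]
      chord_bounds[OF that] unfolding chord_seg_def by simp
  then show ?thesis unfolding triangles_def using pkq by simp
qed

lemma interior_triangle_disjoint_side:
  assumes t: "t \<in> triangles v n \<delta>" and "is_side p k" "k < n"
  shows "interior (tri v t) \<inter> closed_segment (v p) (v k) = {}"
proof -
  obtain x y z where xyz: "t = (x, y, z)" "x < y" "y < z" "z < n"
    using t unfolding triangles_def by auto
  consider "k = Suc p" | "(p, k) = (0, n - 1)" | "(p, k) \<in> \<delta>"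
    using assms(2) unfolding is_side_def ext_chords_def by auto
  then show ?thesis
  proof cases
    case 1
    then show ?thesis using interior_tri_disjoint_edge[of x y z p] xyz \<open>k < n\<close> by simp
  next
    case 2
    then show ?thesis using interior_tri_disjoint_closing_edge[of x y z] xyz by simp
  next
    case 3
    then show ?thesis using t unfolding triangles_def chord_seg_def by fastforce
  qed
qed

lemma face_covers_inner_side:
  assumes a: "a \<in> polygon v n"
  shows "(p, q) \<in> ext_chords \<Longrightarrow> 0 \<le> sarea (v q) (v p) a \<Longrightarrow>
    \<exists>p' k' q'. face p' k' q' \<and> a \<in> tri v (p', k', q')"
proof (induction "q - p" arbitrary: p q rule: less_induct)
  case less
  obtain k where k: "p < k" "k < q" "is_side p k" "is_side k q"
    using ext_chord_apex[OF less.prems(1)] by blast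
  then have face: "face p k q" using less.prems(1) unfolding face_def by simp
  then have "q < n" using face_bounds by blast
  consider "0 \<le> sarea (v p) (v k) a \<and> 0 \<le> sarea (v k) (v q) a"
    | "sarea (v p) (v k) a < 0" | "sarea (v k) (v q) a < 0" by linarith
  then show ?case
  proof cases
    case 1
    then have "a \<in> tri v (p, k, q)" using mem_tri_iff[OF k(1,2) \<open>q < n\<close>] less.prems(2) by simp
    then show ?thesis using face by blast
  next
    case 2
    then have "k \<noteq> Suc p" using polygon_left_of_edge[OF _ a, of p] k \<open>q < n\<close> by auto
    then have "(p, k) \<in> ext_chords" using k(3) unfolding is_side_def by simp
    moreover have "0 \<le> sarea (v k) (v p) a" using 2 sarea_swap12[of "v k" "v p" a] by simp
    ultimately show ?thesis using less.hyps[of k p] k by simp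
  next
    case 3
    then have "q \<noteq> Suc k" using polygon_left_of_edge[OF _ a, of k] \<open>q < n\<close> by auto
    then have "(k, q) \<in> ext_chords" using k(4) unfolding is_side_def by simp
    moreover have "0 \<le> sarea (v q) (v k) a" using 3 sarea_swap12[of "v q" "v k" a] by simp
    ultimately show ?thesis using less.hyps[of q k] k by simp
  qed
qed

lemma polygon_covered_by_faces:
  assumes "a \<in> polygon v n"
  obtains p k q where "face p k q" "a \<in> tri v (p, k, q)"
  using face_covers_inner_side[OF assms, of 0 "n - 1"] polygon_left_of_closing_edge[OF assms]
  unfolding ext_chords_def by auto

text \<open>The interior of a region misses the sides of a face, so by connectedness it either lies
  inside the face or misses it.\<close>
lemma bary_triangle_eq_face:
  assumes t: "(x, y, z) \<in> triangles v n \<delta>" and face: "face p k q"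
    and a: "a \<in> tri v (x, y, z)" "a \<in> tri v (p, k, q)"
  shows "bary v (x, y, z) a = bary v (p, k, q) a"
proof -
  have xyz: "x < y" "y < z" "z < n" using t by (simp_all add: triangles_def)
  have pkq: "p < k" "k < q" "q < n" using face_bounds[OF face] by auto
  let ?U = "interior (tri v (x, y, z))" and ?T0 = "tri v (p, k, q)"
  have sides: "is_side p k" "is_side k q" "is_side p q"
    using face by (auto simp: face_def is_side_def)
  have "frontier ?T0 \<subseteq> closed_segment (v p) (v k) \<union> closed_segment (v k) (v q) \<union> closed_segment (v p) (v q)"
    using frontier_convex_hull3_subset[OF sarea_vertices_pos[OF pkq]]
    unfolding tri_def closed_segment_commute[of "v q" "v p"] by simp
  then have "?U \<inter> frontier ?T0 = {}"
    using interior_triangle_disjoint_side[OF t] sides pkq by fastforce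
  then have "?U \<inter> ?T0 = {} \<or> ?U - ?T0 = {}"
    using connected_Int_frontier[of ?U ?T0] convex_connected[OF convex_interior[OF convex_tri]] by blast
  then show ?thesis
  proof
    assume "?U \<inter> ?T0 = {}"
    then have "?U \<inter> interior ?T0 = {}" using interior_subset by blast
    then show ?thesis using bary_eq_if_interiors_disjoint[OF xyz pkq _ a] by blast
  next
    assume "?U - ?T0 = {}"
    then have "(x, y, z) = (p, k, q)" using tri_eq_if_interior_subset[OF xyz pkq] by blast
    then show ?thesis by simp
  qed
qed

text \<open>Every triangle of the enumeration that contains a carries the same areal coordinate of a,
  so the defining sum telescopes to its first such term.\<close>
lemma chordal_coord_eq_bary:
  assumes face: "face p k q" and a: "a \<in> tri v (p, k, q)"
    and ts: "set ts = {t \<in> triangles v n \<delta>. tri_vertex i t}"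
  shows "chordal_coord v ts i a = bary v (p, k, q) a i"
proof -
  have areal_eq: "areal v (ts ! j) i a = bary v (p, k, q) a i"
    if "j < length ts" "a \<in> tri v (ts ! j)" for j
  proof -
    obtain x y z where t: "ts ! j = (x, y, z)" by (cases "ts ! j") auto
    have "(x, y, z) \<in> triangles v n \<delta>" "tri_vertex i (x, y, z)"
      using ts nth_mem[OF that(1)] t by auto
    then have "areal v (x, y, z) i a = bary v (x, y, z) a i" by (simp add: bary_def)
    also have "\<dots> = bary v (p, k, q) a i"
      using bary_triangle_eq_face[OF _ face _ a] \<open>(x, y, z) \<in> triangles v n \<delta>\<close> that(2) t by simp
    finally show ?thesis using t by simp
  qed
  have "chordal_coord v ts i a = (if \<exists>j<length ts. a \<in> tri v (ts ! j) then bary v (p, k, q) a i else 0)"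
    unfolding chordal_coord_def by (rule sum_indicator_telescope) (use areal_eq in blast)
  moreover have "bary v (p, k, q) a i = 0" if "\<not> (\<exists>j<length ts. a \<in> tri v (ts ! j))"
  proof -
    have "(p, k, q) \<notin> set ts" using that a by (metis in_set_conv_nth)
    then have "\<not> tri_vertex i (p, k, q)" using ts face_in_triangles[OF face] by simp
    then show ?thesis by (simp add: bary_def)
  qed
  ultimately show ?thesis by auto
qed

end

theorem theorem7p14:
  fixes v :: "nat \<Rightarrow> real \<times> real" and n :: nat
    and \<delta> :: "(nat \<times> nat) set"
    and enum :: "nat \<Rightarrow> (nat \<times> nat \<times> nat) list"
    and a :: "real \<times> real"
  assumes "convex_polygon_ccw v n"
    and "chordal_decomposition v n \<delta>"
    and "\<forall>i<n. distinct (enum i) \<and>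
           set (enum i) = {t \<in> triangles v n \<delta>. tri_vertex i t}"
    and "a \<in> polygon v n"
  shows "(\<Sum>i<n. chordal_coord v (enum i) i a) = 1
       \<and> a = (\<Sum>i<n. chordal_coord v (enum i) i a *\<^sub>R v i)"
proof -
  interpret chordal_polygon v n \<delta>
    using assms(1,2) by unfold_locales
  obtain p k q where face: "face p k q" and a: "a \<in> tri v (p, k, q)"
    using polygon_covered_by_faces[OF assms(4)] by blast
  have pkq: "p < k" "k < q" "q < n" using face_bounds[OF face] by auto
  have "chordal_coord v (enum i) i a = bary v (p, k, q) a i" if "i < n" for i
    using chordal_coord_eq_bary[OF face a] assms(3) that by blast
  then show ?thesis using sum_bary[OF pkq, of a] by simp
qed

end
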